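(* Let $\mathcal{S}=\{S_t\}_{t=1}^T$ be a temporal feedback graph with $K\ge 2$ actions, let $C_1,\dots,C_N$ be its maximal orders, and let $\mathsf{UB}(\mathcal{S})$ be the optimal value of the upper bound program. If Algorithm 1 (described in the context) is run with an optimal solution $\boldsymbol\lambda^*$ of the upper bound program, then its worst-case regret is at most $O(\mathsf{UB}(\mathcal{S})\sqrt{\log K})$.
   Context: Setting: $T$ rounds, action set $\Delta_K$ (probability distributions over $[K]$), loss vectors $\ell_t\in[0,1]^K$. A temporal feedback graph $\mathcal{S}$ is a collection of subsets $S_t\subseteq[T]\setminus\{t\}$, $t\in[T]$; $S_t$ is the set of rounds whose losses are visible at round $t$. An $\mathcal{S}$-learning algorithm is a collection of functions $A_t$ mapping the losses $(\ell_s)_{s\in S_t}$ to an action $x_t\in\Delta_K$. Its regret on a loss sequence $\boldsymbol\ell=(\ell_1,\dots,\ell_T)$ is $\mathrm{Reg}(\mathcal{A},\boldsymbol\ell)=\sum_{t=1}^T\langle x_t,\ell_t\rangle-\min_{x^*\in\Delta_K}\sum_{t=1}^T\langle x^*,\ell_t\rangle$, and its worst-case regret is $\mathrm{Reg}(\mathcal{A})=\max_{\boldsymbol\ell\in([0,1]^K)^T}\mathrm{Reg}(\mathcal{A},\boldsymbol\ell)$. A sequence of rounds $t_1,\dots,t_w$ is an order if $t_u\in S_{t_v}$ for all $u<v$; it is maximal if no super-sequence of it is an order. Let $C_1,\dots,C_N$ be all maximal orders. The upper bound program is: minimize $\sum_{c=1}^N\sqrt{\sum_{t\in C_c}\lambda_{c,t}^2}$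 subject to $\sum_{c=1}^N\lambda_{c,t}=1$ for all $t\in[T]$, $\lambda_{c,t}=0$ if $t\notin C_c$, and $\lambda_{c,t}\ge 0$; $\mathsf{UB}(\mathcal{S})$ denotes its optimal value. Algorithm 1 (input: a feasible $\boldsymbol\lambda$ for the upper bound program): for each $c$ set $\eta_c=\sqrt{(\log K)/\sum_{t\in C_c}\lambda_{c,t}^2}$. At round $t$, for each order $C_c$ containing $t$, let $t_1,\dots,t_w=t$ be the prefix of $C_c$ up to and including $t$ and define $x^{(c)}_t\in\Delta_K$ by $x^{(c)}_{t,i}=\exp(-\eta_c\sum_{u=1}^{w-1}\lambda_{c,t_u}\ell_{t_u,i})/\sum_{j=1}^K\exp(-\eta_c\sum_{u=1}^{w-1}\lambda_{c,t_u}\ell_{t_u,j})$; play $x_t=\sum_{c:\,t\in C_c}\lambda_{c,t}x^{(c)}_t$. *)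

theory Defs
  imports "HOL-Analysis.Analysis" "HOL-Library.Sublist"
begin

text \<open>Rounds are the naturals 1..T; actions are 0..K-1 (i < K).
  A loss sequence is a function l :: nat => nat => real, l t i being the loss of
  action i at round t.
  An order is represented as a list of rounds; a coefficient vector lambda of the
  upper bound program is a function indexed by (maximal order, round).\<close>

definition temporal_feedback_graph :: "nat \<Rightarrow> (nat \<Rightarrow> nat set) \<Rightarrow> bool" where
  "temporal_feedback_graph T S \<longleftrightarrow> (\<forall>t\<in>{1..T}. S t \<subseteq> {1..T} - {t})"

definition is_order :: "nat \<Rightarrow> (nat \<Rightarrow> nat set) \<Rightarrow> nat list \<Rightarrow> bool" where
  "is_order T S ts \<longleftrightarrow> set ts \<subseteq> {1..T} \<and>
     (\<forall>u v. u < v \<and> v < length ts \<longrightarrow> ts ! u \<in> S (ts ! v))"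

definition is_maximal_order :: "nat \<Rightarrow> (nat \<Rightarrow> nat set) \<Rightarrow> nat list \<Rightarrow> bool" where
  "is_maximal_order T S ts \<longleftrightarrow> is_order T S ts \<and>
     \<not> (\<exists>ys. is_order T S ys \<and> strict_subseq ts ys)"

definition maximal_orders :: "nat \<Rightarrow> (nat \<Rightarrow> nat set) \<Rightarrow> nat list set" where
  "maximal_orders T S = {ts. is_maximal_order T S ts}"

definition ub_feasible :: "nat \<Rightarrow> (nat \<Rightarrow> nat set) \<Rightarrow> (nat list \<Rightarrow> nat \<Rightarrow> real) \<Rightarrow> bool" where
  "ub_feasible T S lam \<longleftrightarrow>
     (\<forall>t\<in>{1..T}. (\<Sum>C\<in>maximal_orders T S. lam C t) = 1) \<and>
     (\<forall>C\<in>maximal_orders T S. \<forall>t\<in>{1..T}. t \<notin> set C \<longrightarrow> lam C t = 0) \<and>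
     (\<forall>C\<in>maximal_orders T S. \<forall>t\<in>{1..T}. lam C t \<ge> 0)"

definition ub_objective :: "nat \<Rightarrow> (nat \<Rightarrow> nat set) \<Rightarrow> (nat list \<Rightarrow> nat \<Rightarrow> real) \<Rightarrow> real" where
  "ub_objective T S lam = (\<Sum>C\<in>maximal_orders T S. sqrt (\<Sum>t\<in>set C. (lam C t)^2))"

definition UB :: "nat \<Rightarrow> (nat \<Rightarrow> nat set) \<Rightarrow> real" where
  "UB T S = Inf {ub_objective T S lam | lam. ub_feasible T S lam}"

definition ub_optimal :: "nat \<Rightarrow> (nat \<Rightarrow> nat set) \<Rightarrow> (nat list \<Rightarrow> nat \<Rightarrow> real) \<Rightarrow> bool" where
  "ub_optimal T S lam \<longleftrightarrow> ub_feasible T S lam \<and> ub_objective T S lam = UB T S"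

definition alg_eta :: "nat \<Rightarrow> (nat list \<Rightarrow> nat \<Rightarrow> real) \<Rightarrow> nat list \<Rightarrow> real" where
  "alg_eta K lam C = sqrt (ln (real K) / (\<Sum>t\<in>set C. (lam C t)^2))"

text \<open>Weighted cumulative loss of action i over the rounds of C strictly before t
  (the prefix t_1, ..., t_{w-1} of C, where t_w = t).\<close>
definition alg_cumloss :: "(nat list \<Rightarrow> nat \<Rightarrow> real) \<Rightarrow> (nat \<Rightarrow> nat \<Rightarrow> real) \<Rightarrow> nat list \<Rightarrow> nat \<Rightarrow> nat \<Rightarrow> real" where
  "alg_cumloss lam l C t i = sum_list (map (\<lambda>s. lam C s * l s i) (takeWhile (\<lambda>s. s \<noteq> t) C))"

definition alg_sub_action :: "nat \<Rightarrow> (nat list \<Rightarrow> nat \<Rightarrow> real) \<Rightarrow> (nat \<Rightarrow> nat \<Rightarrow> real) \<Rightarrow> nat list \<Rightarrow> nat \<Rightarrow> nat \<Rightarrow> real" where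
  "alg_sub_action K lam l C t i =
     exp (- alg_eta K lam C * alg_cumloss lam l C t i) /
     (\<Sum>j<K. exp (- alg_eta K lam C * alg_cumloss lam l C t j))"

definition alg_action :: "nat \<Rightarrow> nat \<Rightarrow> (nat \<Rightarrow> nat set) \<Rightarrow> (nat list \<Rightarrow> nat \<Rightarrow> real) \<Rightarrow> (nat \<Rightarrow> nat \<Rightarrow> real) \<Rightarrow> nat \<Rightarrow> nat \<Rightarrow> real" where
  "alg_action T K S lam l t i =
     (\<Sum>C\<in>{C\<in>maximal_orders T S. t \<in> set C}. lam C t * alg_sub_action K lam l C t i)"

definition prob_simplex :: "nat \<Rightarrow> (nat \<Rightarrow> real) set" where
  "prob_simplex K = {x. (\<forall>i<K. x i \<ge> 0) \<and> (\<Sum>i<K. x i) = 1}"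

definition valid_losses :: "nat \<Rightarrow> nat \<Rightarrow> (nat \<Rightarrow> nat \<Rightarrow> real) \<Rightarrow> bool" where
  "valid_losses T K l \<longleftrightarrow> (\<forall>t\<in>{1..T}. \<forall>i<K. 0 \<le> l t i \<and> l t i \<le> 1)"

definition regret :: "nat \<Rightarrow> nat \<Rightarrow> (nat \<Rightarrow> nat \<Rightarrow> real) \<Rightarrow> (nat \<Rightarrow> nat \<Rightarrow> real) \<Rightarrow> real" where
  "regret T K x l =
     (\<Sum>t=1..T. \<Sum>i<K. x t i * l t i) -
     Inf {(\<Sum>t=1..T. \<Sum>i<K. y i * l t i) | y. y \<in> prob_simplex K}"

definition alg_worst_regret :: "nat \<Rightarrow> nat \<Rightarrow> (nat \<Rightarrow> nat set) \<Rightarrow> (nat list \<Rightarrow> nat \<Rightarrow> real) \<Rightarrow> real" where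
  "alg_worst_regret T K S lam =
     Sup {regret T K (alg_action T K S lam l) l | l. valid_losses T K l}"

end

theory Submission
  imports Defs
begin

text \<open>Along a maximal order C every earlier round of C is visible, so the
  distributions x^(c)_t of Algorithm 1 are exactly exponential weights (Hedge) run on
  the losses lambda_{C,t} l_t of the rounds of C, in the order of C. With losses in
  [0, lambda_{C,t}] the usual potential argument bounds the regret of this copy against
  any fixed y by ln K / eta + eta/2 * sum_t lambda_{C,t}^2, which for eta = eta_C equals
  3/2 * sqrt (ln K * sum_t lambda_{C,t}^2). Since sum_C lambda_{C,t} = 1, both the loss of
  Algorithm 1 and the loss of y split into lambda-weighted sums over the maximal orders,
  so the regret is at most 3/2 * sqrt (ln K) times the objective value of lambda.\<close>

lemma exp_minus_le_quadratic:
  fixes x :: real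
  assumes "0 \<le> x"
  shows "exp (- x) \<le> 1 - x + x\<^sup>2 / 2"
proof -
  let ?f = "\<lambda>x::real. 1 - x + x\<^sup>2 / 2 - exp (- x)"
  have "?f 0 \<le> ?f x"
  proof (rule deriv_nonneg_imp_mono[OF _ _ assms])
    fix z :: real
    show "(?f has_real_derivative - 1 + z + exp (- z)) (at z)"
      by (auto intro!: derivative_eq_intros simp: power2_eq_square)
    show "0 \<le> - 1 + z + exp (- z)"
      using exp_ge_add_one_self[of "- z"] by linarith
  qed
  then show ?thesis by simp
qed

lemma sum_exp_minus_le_exp_mean:
  fixes p h :: "'a \<Rightarrow> real"
  assumes "finite A" and p: "\<And>i. i \<in> A \<Longrightarrow> 0 \<le> p i" "sum p A = 1"
    and h: "\<And>i. i \<in> A \<Longrightarrow> 0 \<le> h i \<and> h i \<le> b" and "0 \<le> \<eta>"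
  shows "(\<Sum>i\<in>A. p i * exp (- \<eta> * h i)) \<le> exp (- \<eta> * (\<Sum>i\<in>A. p i * h i) + \<eta>\<^sup>2 / 2 * b\<^sup>2)"
proof -
  have "(\<Sum>i\<in>A. p i * exp (- \<eta> * h i)) \<le> (\<Sum>i\<in>A. p i * (1 - \<eta> * h i + \<eta>\<^sup>2 / 2 * b\<^sup>2))"
  proof (intro sum_mono mult_left_mono)
    fix i assume i: "i \<in> A"
    have "exp (- \<eta> * h i) \<le> 1 - \<eta> * h i + (\<eta> * h i)\<^sup>2 / 2"
      using exp_minus_le_quadratic[of "\<eta> * h i"] h[OF i] \<open>0 \<le> \<eta>\<close> by simp
    also have "(\<eta> * h i)\<^sup>2 \<le> \<eta>\<^sup>2 * b\<^sup>2"
      unfolding power_mult_distrib using h[OF i] by (intro mult_left_mono power_mono) auto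
    finally show "exp (- \<eta> * h i) \<le> 1 - \<eta> * h i + \<eta>\<^sup>2 / 2 * b\<^sup>2" by simp
  qed (use p in auto)
  also have "\<dots> = (\<Sum>i\<in>A. p i * (1 + \<eta>\<^sup>2 / 2 * b\<^sup>2) - \<eta> * (p i * h i))"
    by (simp add: algebra_simps)
  also have "\<dots> = 1 + (- \<eta> * (\<Sum>i\<in>A. p i * h i) + \<eta>\<^sup>2 / 2 * b\<^sup>2)"
    using p(2) by (simp add: sum_subtractf sum_negf sum_distrib_left flip: sum_distrib_right)
  also have "\<dots> \<le> exp (- \<eta> * (\<Sum>i\<in>A. p i * h i) + \<eta>\<^sup>2 / 2 * b\<^sup>2)"
    by (rule exp_ge_add_one_self)
  finally show ?thesis .
qed

definition exp_potential :: "nat \<Rightarrow> real \<Rightarrow> (nat \<Rightarrow> nat \<Rightarrow> real) \<Rightarrow> nat \<Rightarrow> real" where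
  "exp_potential K \<eta> g u = (\<Sum>j<K. exp (- \<eta> * (\<Sum>v<u. g v j)))"

definition exp_weights :: "nat \<Rightarrow> real \<Rightarrow> (nat \<Rightarrow> nat \<Rightarrow> real) \<Rightarrow> nat \<Rightarrow> nat \<Rightarrow> real" where
  "exp_weights K \<eta> g u i = exp (- \<eta> * (\<Sum>v<u. g v i)) / exp_potential K \<eta> g u"

lemma exp_potential_pos: "1 \<le> K \<Longrightarrow> 0 < exp_potential K \<eta> g u"
  unfolding exp_potential_def by (intro sum_pos) (auto simp: lessThan_empty_iff)

lemma exp_weights_in_prob_simplex:
  assumes "1 \<le> K"
  shows "exp_weights K \<eta> g u \<in> prob_simplex K"
  using exp_potential_pos[OF assms, of \<eta> g u]
  by (simp add: prob_simplex_def exp_weights_def exp_potential_def flip: sum_divide_distrib)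

lemma exp_potential_Suc:
  assumes "1 \<le> K"
  shows "exp_potential K \<eta> g (Suc u)
    = exp_potential K \<eta> g u * (\<Sum>i<K. exp_weights K \<eta> g u i * exp (- \<eta> * g u i))"
  using exp_potential_pos[OF assms, of \<eta> g u]
  by (simp add: exp_weights_def exp_potential_def sum_distrib_left algebra_simps
      flip: exp_add)

lemma exp_potential_le:
  assumes "1 \<le> K" "0 \<le> \<eta>" and g: "\<And>u i. u < n \<Longrightarrow> i < K \<Longrightarrow> 0 \<le> g u i \<and> g u i \<le> b u"
  shows "exp_potential K \<eta> g n
    \<le> K * exp (- \<eta> * (\<Sum>u<n. \<Sum>i<K. exp_weights K \<eta> g u i * g u i) + \<eta>\<^sup>2 / 2 * (\<Sum>u<n. (b u)\<^sup>2))"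
  using g
proof (induction n)
  case 0
  then show ?case by (simp add: exp_potential_def)
next
  case (Suc n)
  let ?p = "exp_weights K \<eta> g n"
  have "exp_potential K \<eta> g (Suc n) = exp_potential K \<eta> g n * (\<Sum>i<K. ?p i * exp (- \<eta> * g n i))"
    by (rule exp_potential_Suc[OF \<open>1 \<le> K\<close>])
  also have "\<dots> \<le> exp_potential K \<eta> g n * exp (- \<eta> * (\<Sum>i<K. ?p i * g n i) + \<eta>\<^sup>2 / 2 * (b n)\<^sup>2)"
    using exp_weights_in_prob_simplex[OF \<open>1 \<le> K\<close>] less_imp_le[OF exp_potential_pos[OF \<open>1 \<le> K\<close>]]
      Suc.prems \<open>0 \<le> \<eta>\<close>
    by (intro mult_left_mono sum_exp_minus_le_exp_mean) (auto simp: prob_simplex_def)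
  also have "\<dots> \<le> K * exp (- \<eta> * (\<Sum>u<n. \<Sum>i<K. exp_weights K \<eta> g u i * g u i) + \<eta>\<^sup>2 / 2 * (\<Sum>u<n. (b u)\<^sup>2))
      * exp (- \<eta> * (\<Sum>i<K. ?p i * g n i) + \<eta>\<^sup>2 / 2 * (b n)\<^sup>2)"
    using Suc by (intro mult_right_mono) auto
  also have "\<dots> = K * exp (- \<eta> * (\<Sum>u<Suc n. \<Sum>i<K. exp_weights K \<eta> g u i * g u i)
      + \<eta>\<^sup>2 / 2 * (\<Sum>u<Suc n. (b u)\<^sup>2))"
    by (simp add: mult.assoc algebra_simps flip: exp_add)
  finally show ?case .
qed

lemma exp_weights_regret:
  assumes "1 \<le> K" "0 < \<eta>" and g: "\<And>u i. u < n \<Longrightarrow> i < K \<Longrightarrow> 0 \<le> g u i \<and> g u i \<le> b u"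
    and y: "y \<in> prob_simplex K"
  shows "(\<Sum>u<n. \<Sum>i<K. exp_weights K \<eta> g u i * g u i) - (\<Sum>u<n. \<Sum>i<K. y i * g u i)
    \<le> ln K / \<eta> + \<eta> / 2 * (\<Sum>u<n. (b u)\<^sup>2)"
proof -
  define W where "W = exp_potential K \<eta> g n"
  define P where "P = (\<Sum>u<n. \<Sum>i<K. exp_weights K \<eta> g u i * g u i)"
  define Y where "Y = (\<Sum>u<n. \<Sum>i<K. y i * g u i)"
  have "0 < W" unfolding W_def using exp_potential_pos[OF \<open>1 \<le> K\<close>] .
  have "W \<le> K * exp (- \<eta> * P + \<eta>\<^sup>2 / 2 * (\<Sum>u<n. (b u)\<^sup>2))"
    unfolding W_def P_def using assms by (intro exp_potential_le) auto
  then have "ln W \<le> ln (K * exp (- \<eta> * P + \<eta>\<^sup>2 / 2 * (\<Sum>u<n. (b u)\<^sup>2)))"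
    using \<open>0 < W\<close> by simp
  also have "\<dots> = ln K - \<eta> * P + \<eta>\<^sup>2 / 2 * (\<Sum>u<n. (b u)\<^sup>2)"
    using \<open>1 \<le> K\<close> by (simp add: ln_mult)
  finally have upper: "ln W \<le> ln K - \<eta> * P + \<eta>\<^sup>2 / 2 * (\<Sum>u<n. (b u)\<^sup>2)" .
  \<comment> \<open>the potential dominates the weight of every single action, hence of the comparator\<close>
  have "- \<eta> * (\<Sum>v<n. g v i) \<le> ln W" if "i < K" for i
  proof -
    have "exp (- \<eta> * (\<Sum>v<n. g v i)) \<le> W"
      unfolding W_def exp_potential_def using that by (intro member_le_sum) auto
    then show ?thesis using \<open>0 < W\<close> by (simp add: ln_ge_iff)
  qed
  then have "(\<Sum>i<K. y i * (- \<eta> * (\<Sum>v<n. g v i))) \<le> (\<Sum>i<K. y i * ln W)"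
    using y by (intro sum_mono mult_left_mono) (auto simp: prob_simplex_def)
  also have "\<dots> = ln W"
    using y by (simp add: prob_simplex_def flip: sum_distrib_right)
  also have "(\<Sum>i<K. y i * (- \<eta> * (\<Sum>v<n. g v i))) = - \<eta> * Y"
    unfolding Y_def by (simp add: sum_distrib_left sum.swap[of _ "{..<n}"] algebra_simps)
  finally have lower: "- \<eta> * Y \<le> ln W" .
  have "\<eta> * (P - Y) \<le> ln K + \<eta>\<^sup>2 / 2 * (\<Sum>u<n. (b u)\<^sup>2)"
    using upper lower by (simp add: algebra_simps)
  also have "\<dots> = \<eta> * (ln K / \<eta> + \<eta> / 2 * (\<Sum>u<n. (b u)\<^sup>2))"
    using \<open>0 < \<eta>\<close> by (simp add: field_simps power2_eq_square)
  finally show ?thesis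
    unfolding P_def Y_def using \<open>0 < \<eta>\<close> by simp
qed

lemma takeWhile_neq_nth_distinct:
  "distinct xs \<Longrightarrow> u < length xs \<Longrightarrow> takeWhile (\<lambda>s. s \<noteq> xs ! u) xs = take u xs"
  by (rule takeWhile_eq_take_P_nth) (auto simp: nth_eq_iff_index_eq)

lemma sum_set_distinct_conv_nth: "distinct xs \<Longrightarrow> sum f (set xs) = (\<Sum>u<length xs. f (xs ! u))"
  by (simp add: sum.distinct_set_conv_list sum_list_sum_nth atLeast0LessThan)

lemma alg_sub_action_nth:
  assumes "distinct C" "u < length C"
  shows "alg_sub_action K lam l C (C ! u) i
    = exp_weights K (alg_eta K lam C) (\<lambda>v i. lam C (C ! v) * l (C ! v) i) u i"
proof -
  have "alg_cumloss lam l C (C ! u) j = (\<Sum>v<u. lam C (C ! v) * l (C ! v) j)" for j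
    using assms by (simp add: alg_cumloss_def takeWhile_neq_nth_distinct sum_list_sum_nth
        atLeast0LessThan min_def)
  then show ?thesis
    by (simp add: alg_sub_action_def exp_weights_def exp_potential_def)
qed

lemma learning_rate_tradeoff:
  fixes a Q :: real
  assumes "0 < a" "0 < Q"
  shows "a / sqrt (a / Q) + sqrt (a / Q) / 2 * Q = 3 / 2 * sqrt Q * sqrt a"
proof -
  have "s\<^sup>2 / (s / q) + s / q / 2 * q\<^sup>2 = 3 / 2 * q * s" if "0 < s" "0 < q" for s q :: real
    using that by (simp add: field_simps power2_eq_square)
  from this[of "sqrt a" "sqrt Q"] show ?thesis
    using assms by (simp add: real_sqrt_divide)
qed

lemma alg_order_regret:
  assumes "2 \<le> K" "distinct C" and lam: "\<And>t. t \<in> set C \<Longrightarrow> 0 \<le> lam C t"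
    and l: "\<And>t i. t \<in> set C \<Longrightarrow> i < K \<Longrightarrow> 0 \<le> l t i \<and> l t i \<le> 1"
    and y: "y \<in> prob_simplex K"
  shows "(\<Sum>t\<in>set C. lam C t * (\<Sum>i<K. alg_sub_action K lam l C t i * l t i))
       - (\<Sum>t\<in>set C. lam C t * (\<Sum>i<K. y i * l t i))
    \<le> 3 / 2 * sqrt (\<Sum>t\<in>set C. (lam C t)\<^sup>2) * sqrt (ln K)"
proof (cases "\<forall>t\<in>set C. lam C t = 0")
  case True
  then show ?thesis by simp
next
  case False
  define Q where "Q = (\<Sum>t\<in>set C. (lam C t)\<^sup>2)"
  define \<eta> where "\<eta> = alg_eta K lam C"
  define g where "g = (\<lambda>u i. lam C (C ! u) * l (C ! u) i)"
  obtain t where "t \<in> set C" "lam C t \<noteq> 0"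
    using False by blast
  then have "0 < Q"
    unfolding Q_def by (intro sum_pos2) auto
  have "0 < ln K"
    using \<open>2 \<le> K\<close> by simp
  have \<eta>: "\<eta> = sqrt (ln K / Q)"
    unfolding \<eta>_def alg_eta_def Q_def ..
  have "(\<Sum>u<length C. \<Sum>i<K. exp_weights K \<eta> g u i * g u i) - (\<Sum>u<length C. \<Sum>i<K. y i * g u i)
    \<le> ln K / \<eta> + \<eta> / 2 * (\<Sum>u<length C. (lam C (C ! u))\<^sup>2)"
    using \<open>2 \<le> K\<close> \<open>0 < Q\<close> \<open>0 < ln K\<close> lam l y
    unfolding \<eta> g_def by (intro exp_weights_regret) (auto intro: mult_left_le)
  also have "(\<Sum>u<length C. (lam C (C ! u))\<^sup>2) = Q"
    unfolding Q_def sum_set_distinct_conv_nth[OF \<open>distinct C\<close>] ..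
  also have "ln K / \<eta> + \<eta> / 2 * Q = 3 / 2 * sqrt Q * sqrt (ln K)"
    unfolding \<eta> by (rule learning_rate_tradeoff[OF \<open>0 < ln K\<close> \<open>0 < Q\<close>])
  finally show ?thesis
    using \<open>distinct C\<close> unfolding Q_def
    by (simp add: sum_set_distinct_conv_nth alg_sub_action_nth g_def \<eta>_def
        sum_distrib_left algebra_simps)
qed

lemma is_order_distinct:
  assumes "temporal_feedback_graph T S" "is_order T S C"
  shows "distinct C"
proof -
  have "C ! u \<noteq> C ! v" if "u < v" "v < length C" for u v
  proof -
    have "C ! v \<in> set C"
      using that by simp
    then have "C ! v \<in> {1..T}" "C ! u \<in> S (C ! v)"
      using assms(2) that unfolding is_order_def by blast+
    then show ?thesis
      using assms(1) unfolding temporal_feedback_graph_def by auto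
  qed
  then show ?thesis
    unfolding distinct_conv_nth by (metis linorder_neqE_nat)
qed

lemma set_maximal_order_subset: "C \<in> maximal_orders T S \<Longrightarrow> set C \<subseteq> {1..T}"
  by (simp add: maximal_orders_def is_maximal_order_def is_order_def)

lemma distinct_maximal_order:
  "temporal_feedback_graph T S \<Longrightarrow> C \<in> maximal_orders T S \<Longrightarrow> distinct C"
  by (auto simp: maximal_orders_def is_maximal_order_def intro: is_order_distinct)

lemma finite_maximal_orders:
  assumes "temporal_feedback_graph T S"
  shows "finite (maximal_orders T S)"
  by (rule finite_subset[OF _ finite_subset_distinct[of "{1..T}"]])
    (use set_maximal_order_subset distinct_maximal_order[OF assms] in blast, simp)

lemma sum_rounds_conv_sum_maximal_orders:
  assumes "temporal_feedback_graph T S"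
  shows "(\<Sum>t\<in>{1..T}. \<Sum>C\<in>{C \<in> maximal_orders T S. t \<in> set C}. F C t)
    = (\<Sum>C\<in>maximal_orders T S. \<Sum>t\<in>set C. F C t)"
proof -
  have "{t. t \<in> {1..T} \<and> t \<in> set C} = set C" if "C \<in> maximal_orders T S" for C
    using set_maximal_order_subset[OF that] by blast
  then show ?thesis
    using sum.swap_restrict[OF _ finite_maximal_orders[OF assms], of "{1..T}" "\<lambda>t C. F C t"]
    by simp
qed

lemma sum_rounds_split_feasible:
  assumes "temporal_feedback_graph T S" "ub_feasible T S lam"
  shows "(\<Sum>t=1..T. f t) = (\<Sum>C\<in>maximal_orders T S. \<Sum>t\<in>set C. lam C t * f t)"
proof -
  let ?M = "maximal_orders T S"
  have "(\<Sum>t=1..T. f t) = (\<Sum>t=1..T. \<Sum>C\<in>?M. lam C t * f t)"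
    using assms(2) by (simp add: ub_feasible_def flip: sum_distrib_right)
  also have "\<dots> = (\<Sum>t=1..T. \<Sum>C\<in>{C \<in> ?M. t \<in> set C}. lam C t * f t)"
    using assms(2) finite_maximal_orders[OF assms(1)]
    by (intro sum.cong refl sum.mono_neutral_right) (auto simp: ub_feasible_def)
  finally show ?thesis
    unfolding sum_rounds_conv_sum_maximal_orders[OF assms(1)] .
qed

lemma alg_loss_split:
  assumes "temporal_feedback_graph T S"
  shows "(\<Sum>t=1..T. \<Sum>i<K. alg_action T K S lam l t i * l t i)
    = (\<Sum>C\<in>maximal_orders T S. \<Sum>t\<in>set C. lam C t * (\<Sum>i<K. alg_sub_action K lam l C t i * l t i))"
proof -
  have "(\<Sum>i<K. alg_action T K S lam l t i * l t i)
    = (\<Sum>C\<in>{C \<in> maximal_orders T S. t \<in> set C}. lam C t * (\<Sum>i<K. alg_sub_action K lam l C t i * l t i))"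
    for t
    unfolding alg_action_def sum_distrib_right sum_distrib_left
    by (subst sum.swap) (simp add: mult.assoc)
  then show ?thesis
    using sum_rounds_conv_sum_maximal_orders[OF assms,
        of "\<lambda>C t. lam C t * (\<Sum>i<K. alg_sub_action K lam l C t i * l t i)"]
    by simp
qed

lemma regret_le_of_comparators:
  assumes "1 \<le> K"
    and "\<And>y. y \<in> prob_simplex K \<Longrightarrow>
      (\<Sum>t=1..T. \<Sum>i<K. x t i * l t i) - (\<Sum>t=1..T. \<Sum>i<K. y i * l t i) \<le> B"
  shows "regret T K x l \<le> B"
proof -
  have "(\<lambda>i. if i = 0 then 1 else 0) \<in> prob_simplex K"
    using assms(1) by (simp add: prob_simplex_def sum.delta)
  then have "(\<Sum>t=1..T. \<Sum>i<K. x t i * l t i) - B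
      \<le> Inf {(\<Sum>t=1..T. \<Sum>i<K. y i * l t i) | y. y \<in> prob_simplex K}"
    using assms(2) by (intro cInf_greatest) (force, fastforce)
  then show ?thesis
    unfolding regret_def by simp
qed

lemma alg_regret_le_ub_objective:
  assumes "2 \<le> K" "temporal_feedback_graph T S" "ub_feasible T S lam" "valid_losses T K l"
  shows "regret T K (alg_action T K S lam l) l \<le> 3 / 2 * ub_objective T S lam * sqrt (ln K)"
proof (rule regret_le_of_comparators)
  fix y assume y: "y \<in> prob_simplex K"
  let ?M = "maximal_orders T S"
  have "(\<Sum>t=1..T. \<Sum>i<K. alg_action T K S lam l t i * l t i) - (\<Sum>t=1..T. \<Sum>i<K. y i * l t i)
    = (\<Sum>C\<in>?M. (\<Sum>t\<in>set C. lam C t * (\<Sum>i<K. alg_sub_action K lam l C t i * l t i))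
        - (\<Sum>t\<in>set C. lam C t * (\<Sum>i<K. y i * l t i)))"
    unfolding alg_loss_split[OF assms(2)] sum_rounds_split_feasible[OF assms(2,3)] sum_subtractf ..
  also have "\<dots> \<le> (\<Sum>C\<in>?M. 3 / 2 * sqrt (\<Sum>t\<in>set C. (lam C t)\<^sup>2) * sqrt (ln K))"
  proof (intro sum_mono alg_order_regret[OF assms(1)])
    fix C assume C: "C \<in> ?M"
    show "distinct C"
      using distinct_maximal_order[OF assms(2) C] .
    show "0 \<le> lam C t" if "t \<in> set C" for t
      using assms(3) C that set_maximal_order_subset[OF C] by (auto simp: ub_feasible_def)
    show "0 \<le> l t i \<and> l t i \<le> 1" if "t \<in> set C" "i < K" for t i
      using assms(4) that set_maximal_order_subset[OF C] by (auto simp: valid_losses_def)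
  qed (rule y)
  also have "\<dots> = 3 / 2 * ub_objective T S lam * sqrt (ln K)"
    by (simp add: ub_objective_def sum_distrib_left sum_distrib_right)
  finally show "(\<Sum>t=1..T. \<Sum>i<K. alg_action T K S lam l t i * l t i) - (\<Sum>t=1..T. \<Sum>i<K. y i * l t i)
    \<le> 3 / 2 * ub_objective T S lam * sqrt (ln K)" .
qed (use assms(1) in simp)

theorem theorem1:
  "\<exists>c>0. \<forall>(T::nat) (K::nat) (S::nat \<Rightarrow> nat set) (lam::nat list \<Rightarrow> nat \<Rightarrow> real).
     K \<ge> 2 \<longrightarrow> temporal_feedback_graph T S \<longrightarrow> ub_optimal T S lam \<longrightarrow>
     alg_worst_regret T K S lam \<le> c * UB T S * sqrt (ln (real K))"
proof (intro exI[of _ "3 / 2"] conjI allI impI)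
  fix T K :: nat and S :: "nat \<Rightarrow> nat set" and lam :: "nat list \<Rightarrow> nat \<Rightarrow> real"
  assume "2 \<le> K" "temporal_feedback_graph T S" "ub_optimal T S lam"
  then have "ub_feasible T S lam" "UB T S = ub_objective T S lam"
    by (simp_all add: ub_optimal_def)
  have "valid_losses T K (\<lambda>_ _. 0)"
    by (simp add: valid_losses_def)
  then show "alg_worst_regret T K S lam \<le> 3 / 2 * UB T S * sqrt (ln (real K))"
    unfolding alg_worst_regret_def \<open>UB T S = ub_objective T S lam\<close>
    using alg_regret_le_ub_objective[OF \<open>2 \<le> K\<close> \<open>temporal_feedback_graph T S\<close> \<open>ub_feasible T S lam\<close>]
    by (intro cSup_least) auto
qed simp

end
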